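(* Let $\epsilon,\delta>0$, let $H$ be a harmonic function on $\mathbb{R}^2$ with $\nabla H(x,y)=\nabla H(x,y+2+\delta)$ for all $(x,y)$, and let $u$ be a solution for $H$ (in the sense of the context). Then $u$ is constant on each $\partial D_{Ln}$ and $\partial D_{Rn}$, and for every integer $n$, $$u|_{\partial D_{R,n+1}}-u|_{\partial D_{Rn}}=u|_{\partial D_{L,n+1}}-u|_{\partial D_{Ln}}=H\big(0,1+\tfrac{\delta}{2}\big)-H\big(0,-1-\tfrac{\delta}{2}\big).$$
   Context: For each integer $n$, $D_{Rn}$ is the open unit disk centered at $(1+\frac{\epsilon}{2},\,n(2+\delta))$ and $D_{Ln}$ is the open unit disk centered at $(-1-\frac{\epsilon}{2},\,n(2+\delta))$; $\mathcal D=\bigcup_{n}(D_{Ln}\cup D_{Rn})$; $\Omega=\mathbb{R}\times(-1-\frac{\delta}{2},1+\frac{\delta}{2})$; $\nu$ is the unit normal on disk boundaries pointing into the disk. A solution for $H$ is a function $u$ harmonic in $\mathbb{R}^2\setminus\overline{\mathcal D}$ with: $u$ constant on $\partial D_{L0}$ and on $\partial D_{R0}$; $\int_{\partial D_{L0}}\partial_\nu u\,ds=\int_{\partial D_{R0}}\partial_\nu u\,ds=0$; $\int_{\Omega\setminus\overline{D_{L0}\cup D_{R0}}}|\nabla(u-H)|^2<\infty$; $\nabla u(x,y)=\nabla u(x,y+2+\delta)$ on $\mathbb{R}^2\setminus\overline{\mathcal D}$. For a set on which $u$ is constant, $u|_{\partial D}$ denotes that constant value. *)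

theory Defs
  imports "HOL-Analysis.Analysis"
begin

definition px :: "(real \<times> real \<Rightarrow> real) \<Rightarrow> real \<times> real \<Rightarrow> real" where
  "px u p = deriv (\<lambda>t. u (t, snd p)) (fst p)"

definition py :: "(real \<times> real \<Rightarrow> real) \<Rightarrow> real \<times> real \<Rightarrow> real" where
  "py u p = deriv (\<lambda>t. u (fst p, t)) (snd p)"

definition harmonic_on :: "(real \<times> real) set \<Rightarrow> (real \<times> real \<Rightarrow> real) \<Rightarrow> bool" where
  "harmonic_on S u \<longleftrightarrow> open S
     \<and> (\<forall>p\<in>S. u differentiable (at p))
     \<and> (\<forall>p\<in>S. px u differentiable (at p) \<and> py u differentiable (at p))
     \<and> continuous_on S (px (px u)) \<and> continuous_on S (py (px u))
     \<and> continuous_on S (px (py u)) \<and> continuous_on S (py (py u))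
     \<and> (\<forall>p\<in>S. px (px u) p + py (py u) p = 0)"

definition cR :: "real \<Rightarrow> real \<Rightarrow> int \<Rightarrow> real \<times> real" where
  "cR \<epsilon> \<delta> n = (1 + \<epsilon>/2, real_of_int n * (2 + \<delta>))"

definition cL :: "real \<Rightarrow> real \<Rightarrow> int \<Rightarrow> real \<times> real" where
  "cL \<epsilon> \<delta> n = (-1 - \<epsilon>/2, real_of_int n * (2 + \<delta>))"

definition disks :: "real \<Rightarrow> real \<Rightarrow> (real \<times> real) set" where
  "disks \<epsilon> \<delta> = (\<Union>n. ball (cL \<epsilon> \<delta> n) 1 \<union> ball (cR \<epsilon> \<delta> n) 1)"

definition strip :: "real \<Rightarrow> (real \<times> real) set" where
  "strip \<delta> = UNIV \<times> {-1 - \<delta>/2 <..< 1 + \<delta>/2}"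

text \<open>Flux of u through the circle of radius r around c, with respect to the normal
  pointing into the disk (i.e. towards c): integral of the normal derivative, ds = r dt.\<close>
definition flux_in :: "(real \<times> real \<Rightarrow> real) \<Rightarrow> real \<times> real \<Rightarrow> real \<Rightarrow> real" where
  "flux_in u c r = integral {0..2*pi} (\<lambda>t.
     r * (- (px u (c + r *\<^sub>R (cos t, sin t)) * cos t
             + py u (c + r *\<^sub>R (cos t, sin t)) * sin t)))"

definition solution_for :: "real \<Rightarrow> real \<Rightarrow> (real \<times> real \<Rightarrow> real) \<Rightarrow> (real \<times> real \<Rightarrow> real) \<Rightarrow> bool" where
  "solution_for \<epsilon> \<delta> H u \<longleftrightarrow>
     harmonic_on (- closure (disks \<epsilon> \<delta>)) u
     \<and> continuous_on (- disks \<epsilon> \<delta>) u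
     \<and> (\<exists>a. \<forall>p\<in>sphere (cL \<epsilon> \<delta> 0) 1. u p = a)
     \<and> (\<exists>b. \<forall>p\<in>sphere (cR \<epsilon> \<delta> 0) 1. u p = b)
     \<and> ((\<lambda>r. flux_in u (cL \<epsilon> \<delta> 0) r) \<longlongrightarrow> 0) (at_right 1)
     \<and> ((\<lambda>r. flux_in u (cR \<epsilon> \<delta> 0) r) \<longlongrightarrow> 0) (at_right 1)
     \<and> (\<integral>\<^sup>+ p. ennreal (indicator (strip \<delta> - closure (ball (cL \<epsilon> \<delta> 0) 1 \<union> ball (cR \<epsilon> \<delta> 0) 1)) p
            * ((px u p - px H p)\<^sup>2 + (py u p - py H p)\<^sup>2)) \<partial>lborel) < \<infinity>
     \<and> (\<forall>x y. (x, y) \<notin> closure (disks \<epsilon> \<delta>) \<longrightarrow>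
           px u (x, y) = px u (x, y + 2 + \<delta>) \<and> py u (x, y) = py u (x, y + 2 + \<delta>))"

end

theory Submission
  imports Defs
begin

text \<open>Write \<open>e = (0, 2 + \<delta>)\<close>. Periodicity of the gradients makes \<open>p \<mapsto> u (p + e) - u p\<close>
  and \<open>p \<mapsto> H (p + e) - H p\<close> have vanishing derivative, on the exterior of the disks and on
  the whole plane respectively. Both sets are connected, so these are constants \<open>k\<^sub>u\<close> and
  \<open>k\<^sub>H = H (0, 1 + \<delta>/2) - H (0, -1 - \<delta>/2)\<close>. If \<open>k\<^sub>u \<noteq> k\<^sub>H\<close>, then \<open>\<partial>\<^sub>y(u - H)\<close>
  integrates to \<open>k\<^sub>u - k\<^sub>H\<close> along every vertical period segment of the strip to the right of
  the disks, so by Cauchy-Schwarz the energy of \<open>u - H\<close> in the strip is infinite. Hence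
  \<open>u (p + e) = u p + k\<^sub>H\<close>; by continuity this persists on the boundary circles, and the
  constant boundary values on \<open>\<partial>D\<^sub>L\<^sub>0\<close>, \<open>\<partial>D\<^sub>R\<^sub>0\<close> propagate to all disks.\<close>

lemma has_derivative_px_py:
  fixes f :: "real \<times> real \<Rightarrow> real"
  assumes "f differentiable (at p)"
  shows "(f has_derivative (\<lambda>h. px f p * fst h + py f p * snd h)) (at p)"
proof -
  obtain D where D: "(f has_derivative D) (at p)"
    using assms differentiable_def by blast
  have lin: "linear D"
    using D has_derivative_linear by blast
  obtain x y where p: "p = (x, y)"
    by (cases p)
  have "((\<lambda>t. (t, y)) has_derivative (\<lambda>s. (s, 0))) (at x)"
    by (auto intro!: derivative_eq_intros)
  from has_derivative_compose[OF this, of f D]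
  have "((\<lambda>t. f (t, y)) has_derivative (\<lambda>s. D (s, 0))) (at x)"
    using D p by simp
  moreover have "(\<lambda>s. D (s, 0)) = (*) (D (1, 0))"
  proof
    fix s :: real
    have "D (s, 0) = D (s *\<^sub>R (1, 0))"
      by simp
    also have "\<dots> = s * D (1, 0)"
      using linear_scale[OF lin] by (metis real_scaleR_def)
    finally show "D (s, 0) = D (1, 0) * s"
      by (simp only: mult.commute)
  qed
  ultimately have "((\<lambda>t. f (t, y)) has_real_derivative D (1, 0)) (at x)"
    by (simp add: has_field_derivative_def)
  then have px: "px f p = D (1, 0)"
    unfolding px_def p by (simp add: DERIV_imp_deriv)
  have "((\<lambda>t. (x, t)) has_derivative (\<lambda>s. (0, s))) (at y)"
    by (auto intro!: derivative_eq_intros)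
  from has_derivative_compose[OF this, of f D]
  have "((\<lambda>t. f (x, t)) has_derivative (\<lambda>s. D (0, s))) (at y)"
    using D p by simp
  moreover have "(\<lambda>s. D (0, s)) = (*) (D (0, 1))"
  proof
    fix s :: real
    have "D (0, s) = D (s *\<^sub>R (0, 1))"
      by simp
    also have "\<dots> = s * D (0, 1)"
      using linear_scale[OF lin] by (metis real_scaleR_def)
    finally show "D (0, s) = D (0, 1) * s"
      by (simp only: mult.commute)
  qed
  ultimately have "((\<lambda>t. f (x, t)) has_real_derivative D (0, 1)) (at y)"
    by (simp add: has_field_derivative_def)
  then have py: "py f p = D (0, 1)"
    unfolding py_def p by (simp add: DERIV_imp_deriv)
  have "D = (\<lambda>h. px f p * fst h + py f p * snd h)"
  proof
    fix h :: "real \<times> real"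
    have "D h = D (fst h *\<^sub>R (1, 0) + snd h *\<^sub>R (0, 1))"
      by simp
    also have "\<dots> = fst h * D (1, 0) + snd h * D (0, 1)"
      by (simp only: linear_add[OF lin] linear_scale[OF lin]) simp
    finally show "D h = px f p * fst h + py f p * snd h"
      using px py by (simp add: mult.commute)
  qed
  then show ?thesis
    using D by simp
qed

lemma has_real_derivative_py:
  fixes f :: "real \<times> real \<Rightarrow> real"
  assumes "f differentiable (at (x, t))"
  shows "((\<lambda>s. f (x, s)) has_real_derivative py f (x, t)) (at t)"
proof -
  have "((\<lambda>s. (x, s)) has_derivative (\<lambda>s. (0, s))) (at t)"
    by (auto intro!: derivative_eq_intros)
  from has_derivative_compose[OF this has_derivative_px_py[OF assms]]
  show ?thesis
    by (simp add: has_field_derivative_def)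
qed

lemma has_integral_py:
  fixes f :: "real \<times> real \<Rightarrow> real"
  assumes "a \<le> b" and "\<And>t. t \<in> {a..b} \<Longrightarrow> f differentiable (at (x, t))"
  shows "((\<lambda>t. py f (x, t)) has_integral f (x, b) - f (x, a)) {a..b}"
  using assms
  by (intro fundamental_theorem_of_calculus)
     (auto intro!: has_field_derivative_at_within has_real_derivative_py
           simp: has_real_derivative_iff_has_vector_derivative[symmetric])

lemma has_derivative_shift_difference:
  fixes f :: "'a::real_normed_vector \<Rightarrow> 'b::real_normed_vector"
  assumes "(f has_derivative D) (at (p + e))" and "(f has_derivative D) (at p)"
  shows "((\<lambda>q. f (q + e) - f q) has_derivative (\<lambda>h. 0)) (at p)"
proof -
  have "((\<lambda>q. q + e) has_derivative (\<lambda>h. h)) (at p)"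
    by (auto intro!: derivative_eq_intros)
  from has_derivative_compose[OF this assms(1)]
  have "((\<lambda>q. f (q + e)) has_derivative D) (at p)"
    by simp
  from has_derivative_diff[OF this assms(2)] show ?thesis
    by simp
qed

lemma has_derivative_zero_segment_eq:
  fixes g :: "'a::real_normed_vector \<Rightarrow> 'b::real_normed_vector"
  assumes "\<And>p. p \<in> closed_segment a b \<Longrightarrow> (g has_derivative (\<lambda>h. 0)) (at p)"
  shows "g a = g b"
proof -
  obtain c where "\<forall>p\<in>closed_segment a b. g p = c"
    using has_derivative_zero_constant[OF convex_closed_segment] assms
    by (metis has_derivative_at_withinI)
  then show ?thesis
    by simp
qed

lemma rectangle_integral_square_ge:
  fixes f :: "real \<times> real \<Rightarrow> real"
  assumes cont: "continuous_on (cbox (x0, a) (x1, b)) f" and "a < b" and "x0 \<le> x1"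
    and slices: "\<And>x. x \<in> {x0..x1} \<Longrightarrow> ((\<lambda>t. f (x, t)) has_integral d) {a..b}"
  shows "(x1 - x0) * d\<^sup>2 / (b - a) \<le> integral (cbox (x0, a) (x1, b)) (\<lambda>p. (f p)\<^sup>2)"
proof -
  define k where "k = d / (b - a)"
  define g where "g p = 2 * k * f p - k\<^sup>2" for p
  have cont_g: "continuous_on (cbox (x0, a) (x1, b)) g"
    unfolding g_def by (intro continuous_intros cont)
  have "((\<lambda>t. g (x, t)) has_integral d\<^sup>2 / (b - a)) {a..b}" if "x \<in> {x0..x1}" for x
  proof -
    have "((\<lambda>t. g (x, t)) has_integral 2 * k * d - k\<^sup>2 * (b - a)) {a..b}"
      unfolding g_def using \<open>a < b\<close>
      by (intro has_integral_diff has_integral_mult_right slices that)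
         (use has_integral_const_real[of "k\<^sup>2" a b] in \<open>auto simp: mult.commute\<close>)
    moreover have "2 * k * d - k\<^sup>2 * (b - a) = d\<^sup>2 / (b - a)"
      using \<open>a < b\<close> unfolding k_def by (simp add: power2_eq_square divide_simps)
    ultimately show ?thesis
      by simp
  qed
  then have "integral (cbox x0 x1) (\<lambda>x. integral (cbox a b) (\<lambda>t. g (x, t)))
      = integral {x0..x1} (\<lambda>x. d\<^sup>2 / (b - a))"
    unfolding cbox_interval by (intro integral_cong) (simp add: integral_unique)
  then have "integral (cbox (x0, a) (x1, b)) g = integral {x0..x1} (\<lambda>x. d\<^sup>2 / (b - a))"
    by (simp only: integral_prod_continuous[OF cont_g])
  also have "\<dots> = (x1 - x0) * d\<^sup>2 / (b - a)"
    using \<open>x0 \<le> x1\<close> by simp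
  finally have "integral (cbox (x0, a) (x1, b)) g = (x1 - x0) * d\<^sup>2 / (b - a)" .
  moreover have "integral (cbox (x0, a) (x1, b)) g \<le> integral (cbox (x0, a) (x1, b)) (\<lambda>p. (f p)\<^sup>2)"
  proof (rule integral_le)
    show "g integrable_on cbox (x0, a) (x1, b)" "(\<lambda>p. (f p)\<^sup>2) integrable_on cbox (x0, a) (x1, b)"
      using cont_g cont by (auto intro!: integrable_continuous continuous_intros)
    show "g p \<le> (f p)\<^sup>2" for p
      using zero_le_power2[of "f p - k"] unfolding g_def by (simp add: power2_eq_square algebra_simps)
  qed
  ultimately show ?thesis
    by simp
qed

lemma integral_cbox_le_nn_integral:
  fixes g G :: "'a::euclidean_space \<Rightarrow> real"
  assumes "continuous_on (cbox a b) g" and "\<And>x. x \<in> box a b \<Longrightarrow> 0 \<le> g x \<and> g x \<le> G x"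
  shows "ennreal (integral (cbox a b) g) \<le> (\<integral>\<^sup>+ x. ennreal (G x) \<partial>lborel)"
proof -
  have "(g has_integral integral (cbox a b) g) (box a b)"
    unfolding has_integral_open_interval using assms(1) by (simp add: integrable_continuous integrable_integral)
  then have "ennreal (integral (cbox a b) g) = (\<integral>\<^sup>+ x. ennreal (g x) * indicator (box a b) x \<partial>lborel)"
    using assms(2) by (intro nn_integral_has_integral_lebesgue'[symmetric]) auto
  also have "\<dots> \<le> (\<integral>\<^sup>+ x. ennreal (G x) \<partial>lborel)"
    using assms(2) by (intro nn_integral_mono) (auto simp: indicator_def intro: ennreal_leI)
  finally show ?thesis .
qed

lemma box_Pair_eq: "box (a, c) (b, d) = box a b \<times> box c d"
  for a b c d :: real
  by (force simp: box_def Basis_prod_def)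

lemma abs_diff_int_multiples_ge:
  fixes T :: real
  assumes "T > 0" and "n \<noteq> k"
  shows "T \<le> \<bar>of_int n * T - of_int k * T\<bar>"
proof -
  have "1 \<le> \<bar>of_int n - (of_int k :: real)\<bar>"
    using assms(2) by (metis of_int_1_le_iff of_int_abs of_int_diff zero_less_abs_iff
        right_minus_eq int_one_le_iff_zero_less)
  then have "1 * T \<le> \<bar>of_int n - of_int k\<bar> * T"
    using assms(1) by (intro mult_right_mono) auto
  then show ?thesis
    using assms(1) by (simp add: abs_mult left_diff_distrib[symmetric])
qed

lemma exists_nearest_int_multiple:
  fixes T y :: real
  assumes "T > 0"
  obtains k :: int where "\<bar>y - of_int k * T\<bar> \<le> T / 2"
proof
  have "y - of_int (round (y / T)) * T = T * (y / T - of_int (round (y / T)))"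
    using assms by (simp add: algebra_simps)
  then have "\<bar>y - of_int (round (y / T)) * T\<bar> = T * \<bar>y / T - of_int (round (y / T))\<bar>"
    using assms by (simp add: abs_mult)
  also have "\<dots> \<le> T * (1 / 2)"
    using of_int_round_abs_le[of "y / T"] assms by (intro mult_left_mono) (auto simp: abs_minus_commute)
  finally show "\<bar>y - of_int (round (y / T)) * T\<bar> \<le> T / 2"
    by simp
qed

lemma dist_Pair_le_dist_Pair:
  fixes a b x y t :: real
  assumes "\<bar>y - b\<bar> \<le> \<bar>t - b\<bar>"
  shows "dist (a, b) (x, y) \<le> dist (a, b) (x, t)"
  using assms by (simp add: dist_Pair_Pair dist_real_def abs_le_square_iff power2_commute)

definition centres :: "real \<Rightarrow> real \<Rightarrow> (real \<times> real) set" where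
  "centres \<epsilon> \<delta> = range (cL \<epsilon> \<delta>) \<union> range (cR \<epsilon> \<delta>)"

definition exterior :: "real \<Rightarrow> real \<Rightarrow> (real \<times> real) set" where
  "exterior \<epsilon> \<delta> = {p. \<forall>c\<in>centres \<epsilon> \<delta>. 1 < dist c p}"

lemma disks_eq_Union_balls: "disks \<epsilon> \<delta> = (\<Union>c\<in>centres \<epsilon> \<delta>. ball c 1)"
  unfolding disks_def centres_def by auto

lemma cL_add_period: "cL \<epsilon> \<delta> n + (0, 2 + \<delta>) = cL \<epsilon> \<delta> (n + 1)"
  and cR_add_period: "cR \<epsilon> \<delta> n + (0, 2 + \<delta>) = cR \<epsilon> \<delta> (n + 1)"
  by (simp_all add: cL_def cR_def algebra_simps)

lemma add_period_mem_centres_iff: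
  "c + (0, 2 + \<delta>) \<in> centres \<epsilon> \<delta> \<longleftrightarrow> c \<in> centres \<epsilon> \<delta>"
proof
  assume "c + (0, 2 + \<delta>) \<in> centres \<epsilon> \<delta>"
  then obtain n where "c + (0, 2 + \<delta>) = cL \<epsilon> \<delta> n \<or> c + (0, 2 + \<delta>) = cR \<epsilon> \<delta> n"
    unfolding centres_def by auto
  then have "c = cL \<epsilon> \<delta> (n - 1) \<or> c = cR \<epsilon> \<delta> (n - 1)"
    using cL_add_period[of \<epsilon> \<delta> "n - 1"] cR_add_period[of \<epsilon> \<delta> "n - 1"]
    by (metis add_right_cancel diff_add_cancel)
  then show "c \<in> centres \<epsilon> \<delta>"
    unfolding centres_def by auto
next
  assume "c \<in> centres \<epsilon> \<delta>"
  then show "c + (0, 2 + \<delta>) \<in> centres \<epsilon> \<delta>"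
    unfolding centres_def by (auto simp: cL_add_period cR_add_period)
qed

lemma ex_centre_dist_add_period_iff:
  "(\<exists>c\<in>centres \<epsilon> \<delta>. P (dist c (p + (0, 2 + \<delta>)))) \<longleftrightarrow> (\<exists>c\<in>centres \<epsilon> \<delta>. P (dist c p))"
proof
  assume "\<exists>c\<in>centres \<epsilon> \<delta>. P (dist c (p + (0, 2 + \<delta>)))"
  then obtain c where "c \<in> centres \<epsilon> \<delta>" "P (dist c (p + (0, 2 + \<delta>)))"
    by blast
  moreover have "dist c (p + (0, 2 + \<delta>)) = dist (c - (0, 2 + \<delta>)) p"
    by (metis diff_add_cancel dist_add_cancel2)
  ultimately show "\<exists>c\<in>centres \<epsilon> \<delta>. P (dist c p)"
    by (metis add_period_mem_centres_iff diff_add_cancel)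
next
  assume "\<exists>c\<in>centres \<epsilon> \<delta>. P (dist c p)"
  then show "\<exists>c\<in>centres \<epsilon> \<delta>. P (dist c (p + (0, 2 + \<delta>)))"
    by (metis add_period_mem_centres_iff dist_add_cancel2)
qed

lemma add_period_mem_exterior_iff:
  "p + (0, 2 + \<delta>) \<in> exterior \<epsilon> \<delta> \<longleftrightarrow> p \<in> exterior \<epsilon> \<delta>"
  using ex_centre_dist_add_period_iff[of \<epsilon> \<delta> "\<lambda>r. \<not> 1 < r" p]
  unfolding exterior_def by auto

lemma add_period_mem_disks_iff:
  "p + (0, 2 + \<delta>) \<in> disks \<epsilon> \<delta> \<longleftrightarrow> p \<in> disks \<epsilon> \<delta>"
  using ex_centre_dist_add_period_iff[of \<epsilon> \<delta> "\<lambda>r. r < 1" p]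
  unfolding disks_eq_Union_balls by auto

lemma dist_centre_other_row_ge:
  assumes "\<delta> > 0" and "c \<in> centres \<epsilon> \<delta>" and "c \<noteq> cL \<epsilon> \<delta> k" and "c \<noteq> cR \<epsilon> \<delta> k"
  shows "2 + \<delta> - \<bar>snd p - of_int k * (2 + \<delta>)\<bar> \<le> dist c p"
proof -
  obtain n where n: "c = cL \<epsilon> \<delta> n \<or> c = cR \<epsilon> \<delta> n"
    using assms(2) unfolding centres_def by auto
  with assms(3,4) have "n \<noteq> k"
    by auto
  then have "2 + \<delta> \<le> \<bar>of_int n * (2 + \<delta>) - of_int k * (2 + \<delta>)\<bar>"
    using assms(1) by (intro abs_diff_int_multiples_ge) auto
  moreover have "snd c = of_int n * (2 + \<delta>)"
    using n by (auto simp: cL_def cR_def)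
  moreover have "\<bar>snd c - snd p\<bar> \<le> dist c p"
    using dist_snd_le[of c p] by (simp add: dist_real_def)
  ultimately show ?thesis
    by linarith
qed

lemma centres_separated:
  assumes "\<epsilon> > 0" and "\<delta> > 0" and "c \<in> centres \<epsilon> \<delta>" and "c' \<in> centres \<epsilon> \<delta>" and "c \<noteq> c'"
  shows "2 + min \<epsilon> \<delta> \<le> dist c c'"
proof -
  obtain n where n: "c = cL \<epsilon> \<delta> n \<or> c = cR \<epsilon> \<delta> n"
    using assms(3) unfolding centres_def by auto
  show ?thesis
  proof (cases "c' = cL \<epsilon> \<delta> n \<or> c' = cR \<epsilon> \<delta> n")
    case True
    with n assms(5) have "\<bar>fst c - fst c'\<bar> = 2 + \<epsilon>"
      using assms(1) by (auto simp: cL_def cR_def)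
    moreover have "\<bar>fst c - fst c'\<bar> \<le> dist c c'"
      using dist_fst_le[of c c'] by (simp add: dist_real_def)
    ultimately show ?thesis
      by linarith
  next
    case False
    have "snd c = of_int n * (2 + \<delta>)"
      using n by (auto simp: cL_def cR_def)
    with dist_centre_other_row_ge[OF assms(2,4), of n c] False
    show ?thesis
      by (auto simp: dist_commute)
  qed
qed

lemma open_exterior:
  assumes "\<delta> > 0"
  shows "open (exterior \<epsilon> \<delta>)"
  unfolding open_dist
proof
  fix p assume p: "p \<in> exterior \<epsilon> \<delta>"
  from assms have "(0::real) < 2 + \<delta>"
    by simp
  then obtain k where k: "\<bar>snd p - of_int k * (2 + \<delta>)\<bar> \<le> (2 + \<delta>) / 2"
    by (rule exists_nearest_int_multiple)
  define r where "r = min (\<delta> / 2) (min (dist (cL \<epsilon> \<delta> k) p - 1) (dist (cR \<epsilon> \<delta> k) p - 1))"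
  have r: "r \<le> \<delta> / 2" "r \<le> dist (cL \<epsilon> \<delta> k) p - 1" "r \<le> dist (cR \<epsilon> \<delta> k) p - 1"
    unfolding r_def by linarith+
  have "cL \<epsilon> \<delta> k \<in> centres \<epsilon> \<delta>" "cR \<epsilon> \<delta> k \<in> centres \<epsilon> \<delta>"
    unfolding centres_def by auto
  then have "1 < dist (cL \<epsilon> \<delta> k) p" "1 < dist (cR \<epsilon> \<delta> k) p"
    using p unfolding exterior_def by blast+
  then have "r > 0"
    using assms unfolding r_def by simp
  moreover have "q \<in> exterior \<epsilon> \<delta>" if q: "dist q p < r" for q
    unfolding exterior_def mem_Collect_eq
  proof
    fix c assume c: "c \<in> centres \<epsilon> \<delta>"
    have "1 + r \<le> dist c p"
    proof (cases "c = cL \<epsilon> \<delta> k \<or> c = cR \<epsilon> \<delta> k")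
      case True
      then show ?thesis
        using r by auto
    next
      case False
      then have "2 + \<delta> - \<bar>snd p - of_int k * (2 + \<delta>)\<bar> \<le> dist c p"
        using dist_centre_other_row_ge[OF assms c] by blast
      then show ?thesis
        using k r by argo
    qed
    moreover have "dist c p \<le> dist c q + dist q p"
      by (rule dist_triangle)
    ultimately show "1 < dist c q"
      using q by linarith
  qed
  ultimately show "\<exists>r>0. \<forall>q. dist q p < r \<longrightarrow> q \<in> exterior \<epsilon> \<delta>"
    by blast
qed

lemma exterior_eq_compl_closure_disks:
  assumes "\<delta> > 0"
  shows "exterior \<epsilon> \<delta> = - closure (disks \<epsilon> \<delta>)"
proof
  show "- closure (disks \<epsilon> \<delta>) \<subseteq> exterior \<epsilon> \<delta>"
  proof (unfold exterior_def, safe)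
    fix p c assume p: "p \<notin> closure (disks \<epsilon> \<delta>)" and c: "c \<in> centres \<epsilon> \<delta>"
    have "ball c 1 \<subseteq> disks \<epsilon> \<delta>"
      unfolding disks_eq_Union_balls using c by blast
    then have "cball c 1 \<subseteq> closure (disks \<epsilon> \<delta>)"
      using closure_mono[of "ball c 1" "disks \<epsilon> \<delta>"] by simp
    with p show "1 < dist c p"
      by (meson mem_cball not_le subsetD)
  qed
  have "exterior \<epsilon> \<delta> \<inter> disks \<epsilon> \<delta> = {}"
    unfolding exterior_def disks_eq_Union_balls by (auto dest: less_asym)
  then show "exterior \<epsilon> \<delta> \<subseteq> - closure (disks \<epsilon> \<delta>)"
    using open_Int_closure_eq_empty[OF open_exterior[OF assms]] by blast
qed

lemma vertical_move_mem_exterior: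
  assumes "\<delta> > 0" and "(x, y) \<in> exterior \<epsilon> \<delta>"
    and "\<bar>y - of_int k * (2 + \<delta>)\<bar> \<le> \<bar>t - of_int k * (2 + \<delta>)\<bar>"
    and "\<bar>t - of_int k * (2 + \<delta>)\<bar> \<le> 1 + \<delta> / 2"
  shows "(x, t) \<in> exterior \<epsilon> \<delta>"
  unfolding exterior_def mem_Collect_eq
proof
  fix c assume c: "c \<in> centres \<epsilon> \<delta>"
  show "1 < dist c (x, t)"
  proof (cases "c = cL \<epsilon> \<delta> k \<or> c = cR \<epsilon> \<delta> k")
    case True
    then have "c = (fst c, of_int k * (2 + \<delta>))"
      by (auto simp: cL_def cR_def)
    then have "dist c (x, y) \<le> dist c (x, t)"
      using dist_Pair_le_dist_Pair[OF assms(3)] by metis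
    moreover have "1 < dist c (x, y)"
      using assms(2) c unfolding exterior_def by auto
    ultimately show ?thesis
      by linarith
  next
    case False
    then show ?thesis
      using dist_centre_other_row_ge[OF assms(1) c, of k "(x, t)"] assms(1,4) by auto
  qed
qed

lemma gap_line_mem_exterior:
  assumes "\<delta> > 0" and "\<bar>t - of_int k * (2 + \<delta>)\<bar> = 1 + \<delta> / 2"
  shows "(s, t) \<in> exterior \<epsilon> \<delta>"
  unfolding exterior_def mem_Collect_eq
proof
  fix c assume c: "c \<in> centres \<epsilon> \<delta>"
  show "1 < dist c (s, t)"
  proof (cases "c = cL \<epsilon> \<delta> k \<or> c = cR \<epsilon> \<delta> k")
    case True
    then have "\<bar>snd c - t\<bar> = 1 + \<delta> / 2"
      using assms(2) by (auto simp: cL_def cR_def abs_minus_commute)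
    moreover have "\<bar>snd c - t\<bar> \<le> dist c (s, t)"
      using dist_snd_le[of c "(s, t)"] by (simp add: dist_real_def)
    ultimately show ?thesis
      using assms(1) by linarith
  next
    case False
    then show ?thesis
      using dist_centre_other_row_ge[OF assms(1) c, of k "(s, t)"] assms by auto
  qed
qed

lemma axis_mem_exterior:
  assumes "\<epsilon> > 0"
  shows "(0, t) \<in> exterior \<epsilon> \<delta>"
  unfolding exterior_def mem_Collect_eq
proof
  fix c assume "c \<in> centres \<epsilon> \<delta>"
  then have "\<bar>fst c\<bar> = 1 + \<epsilon> / 2"
    using assms unfolding centres_def by (auto simp: cL_def cR_def)
  moreover have "\<bar>fst c - 0\<bar> \<le> dist c (0, t)"
    using dist_fst_le[of c "(0, t)"] by (simp add: dist_real_def)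
  ultimately show "1 < dist c (0, t)"
    using assms by simp
qed

text \<open>An exterior point is joined to the origin inside the exterior by three segments: vertically
  away from the nearest row of centres up to the gap line midway between two rows, along that
  gap line to the \<open>y\<close>-axis, and along the axis, which passes between the two columns of disks.\<close>

lemma exterior_zero_derivative_eq:
  fixes g :: "real \<times> real \<Rightarrow> 'b::real_normed_vector"
  assumes "\<epsilon> > 0" and "\<delta> > 0"
    and zero: "\<And>q. q \<in> exterior \<epsilon> \<delta> \<Longrightarrow> (g has_derivative (\<lambda>h. 0)) (at q)"
    and p: "p \<in> exterior \<epsilon> \<delta>"
  shows "g p = g 0"
proof -
  obtain x y where xy: "p = (x, y)"
    by (cases p)
  from assms(2) have "(0::real) < 2 + \<delta>"
    by simp
  then obtain k where k: "\<bar>y - of_int k * (2 + \<delta>)\<bar> \<le> (2 + \<delta>) / 2"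
    by (rule exists_nearest_int_multiple)
  define y' where "y' = of_int k * (2 + \<delta>) + (if of_int k * (2 + \<delta>) \<le> y then 1 + \<delta> / 2 else - 1 - \<delta> / 2)"
  have gap: "\<bar>y' - of_int k * (2 + \<delta>)\<bar> = 1 + \<delta> / 2"
    using assms(2) unfolding y'_def by auto
  have segment_eq: "g a = g b" if "closed_segment a b \<subseteq> exterior \<epsilon> \<delta>" for a b
    using has_derivative_zero_segment_eq[of a b g] zero that by blast
  have "closed_segment (x, y) (x, y') \<subseteq> exterior \<epsilon> \<delta>"
  proof (clarify dest!: closed_segment_PairD)
    fix s t assume "s \<in> closed_segment x x" and t: "t \<in> closed_segment y y'"
    then have "s = x"
      by simp
    moreover have "\<bar>y - of_int k * (2 + \<delta>)\<bar> \<le> \<bar>t - of_int k * (2 + \<delta>)\<bar>"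
      "\<bar>t - of_int k * (2 + \<delta>)\<bar> \<le> 1 + \<delta> / 2"
      using t k unfolding y'_def closed_segment_eq_real_ivl by (auto split: if_splits)
    ultimately show "(s, t) \<in> exterior \<epsilon> \<delta>"
      using vertical_move_mem_exterior[OF assms(2)] p xy by blast
  qed
  moreover have "closed_segment (x, y') (0, y') \<subseteq> exterior \<epsilon> \<delta>"
    using gap_line_mem_exterior[OF assms(2) gap] by (auto dest!: closed_segment_PairD)
  moreover have "closed_segment (0, y') (0, 0) \<subseteq> exterior \<epsilon> \<delta>"
    using axis_mem_exterior[OF assms(1)] by (auto dest!: closed_segment_PairD)
  ultimately show ?thesis
    using segment_eq xy by (metis zero_prod_def)
qed

lemma sphere_subset_closure_exterior:
  assumes "\<epsilon> > 0" and "\<delta> > 0" and c: "c \<in> centres \<epsilon> \<delta>"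
  shows "sphere c 1 \<subseteq> closure (exterior \<epsilon> \<delta>)"
proof
  fix p assume p: "p \<in> sphere c 1"
  define z where "z s = p + s *\<^sub>R (p - c)" for s :: real
  have "z s \<in> exterior \<epsilon> \<delta>" if s: "0 < s" "s < min \<epsilon> \<delta>" for s
    unfolding exterior_def mem_Collect_eq
  proof
    fix c' assume c': "c' \<in> centres \<epsilon> \<delta>"
    have "z s - c = (1 + s) *\<^sub>R (p - c)"
      unfolding z_def by (simp add: algebra_simps)
    then have "dist c (z s) = norm ((1 + s) *\<^sub>R (p - c))"
      by (metis dist_commute dist_norm)
    also have "\<dots> = 1 + s"
      using p s by (simp add: dist_norm norm_minus_commute)
    finally have dist_z: "dist c (z s) = 1 + s" .
    show "1 < dist c' (z s)"
    proof (cases "c' = c")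
      case False
      then have "2 + min \<epsilon> \<delta> \<le> dist c c'"
        using centres_separated[OF assms(1,2) c c'] by simp
      moreover have "dist c c' \<le> dist c (z s) + dist c' (z s)"
        by (metis dist_commute dist_triangle)
      ultimately show ?thesis
        using dist_z s by linarith
    qed (use dist_z s in simp)
  qed
  then have "eventually (\<lambda>s. z s \<in> exterior \<epsilon> \<delta>) (at_right 0)"
    using eventually_at_right_real[of 0 "min \<epsilon> \<delta>"] assms(1,2)
    by (auto elim!: eventually_mono)
  moreover have "(z \<longlongrightarrow> p) (at_right 0)"
    unfolding z_def by (auto intro!: tendsto_eq_intros)
  ultimately show "p \<in> closure (exterior \<epsilon> \<delta>)"
    by (intro Lim_in_closed_set[OF closed_closure _ trivial_limit_at_right_real])
       (auto elim: eventually_mono intro: closure_subset[THEN subsetD])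
qed

lemma right_half_plane_mem_exterior:
  assumes "\<epsilon> > 0" and "2 + \<epsilon> \<le> fst p"
  shows "p \<in> exterior \<epsilon> \<delta>"
  unfolding exterior_def mem_Collect_eq
proof
  fix c assume "c \<in> centres \<epsilon> \<delta>"
  then have "fst c \<le> 1 + \<epsilon> / 2"
    using assms(1) unfolding centres_def by (auto simp: cL_def cR_def)
  moreover have "\<bar>fst c - fst p\<bar> \<le> dist c p"
    using dist_fst_le[of c p] by (simp add: dist_real_def)
  ultimately show "1 < dist c p"
    using assms by linarith
qed

lemma has_derivative_shift_difference_px_py:
  fixes u :: "real \<times> real \<Rightarrow> real"
  assumes "u differentiable (at p)" and "u differentiable (at (p + e))"
    and "px u (p + e) = px u p" and "py u (p + e) = py u p"
  shows "((\<lambda>q. u (q + e) - u q) has_derivative (\<lambda>h. 0)) (at p)"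
  using has_derivative_px_py[OF assms(2)] has_derivative_px_py[OF assms(1)] assms(3,4)
  by (intro has_derivative_shift_difference) auto

lemma shift_increment_eq:
  fixes u :: "real \<times> real \<Rightarrow> real"
  assumes "\<And>p. u differentiable (at p)"
    and "\<And>p. px u (p + e) = px u p \<and> py u (p + e) = py u p"
  shows "u (p + e) - u p = u (q + e) - u q"
proof -
  have "((\<lambda>q. u (q + e) - u q) has_derivative (\<lambda>h. 0)) (at p within UNIV)" for p
    using assms by (intro has_derivative_shift_difference_px_py) auto
  then obtain c where "\<forall>p\<in>UNIV. u (p + e) - u p = c"
    using has_derivative_zero_constant[OF convex_UNIV] by blast
  then show ?thesis
    by (metis UNIV_I)
qed

lemma exterior_shift_increment_eq:
  fixes u :: "real \<times> real \<Rightarrow> real"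
  assumes "\<epsilon> > 0" and "\<delta> > 0"
    and "\<And>p. p \<in> exterior \<epsilon> \<delta> \<Longrightarrow> u differentiable (at p)"
    and "\<And>p. p \<in> exterior \<epsilon> \<delta> \<Longrightarrow>
      px u (p + (0, 2 + \<delta>)) = px u p \<and> py u (p + (0, 2 + \<delta>)) = py u p"
    and "p \<in> exterior \<epsilon> \<delta>"
  shows "u (p + (0, 2 + \<delta>)) - u p = u (0, 2 + \<delta>) - u 0"
proof -
  have "((\<lambda>q. u (q + (0, 2 + \<delta>)) - u q) has_derivative (\<lambda>h. 0)) (at q)"
    if "q \<in> exterior \<epsilon> \<delta>" for q
    using assms(3,4) that add_period_mem_exterior_iff
    by (intro has_derivative_shift_difference_px_py) auto
  from exterior_zero_derivative_eq[OF assms(1,2) this assms(5)] show ?thesis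
    by simp
qed

definition strip_energy ::
    "real \<Rightarrow> real \<Rightarrow> (real \<times> real \<Rightarrow> real) \<Rightarrow> (real \<times> real \<Rightarrow> real) \<Rightarrow> ennreal" where
  "strip_energy \<epsilon> \<delta> u H =
     (\<integral>\<^sup>+ p. ennreal (indicator (strip \<delta> - closure (ball (cL \<epsilon> \<delta> 0) 1 \<union> ball (cR \<epsilon> \<delta> 0) 1)) p
        * ((px u p - px H p)\<^sup>2 + (py u p - py H p)\<^sup>2)) \<partial>lborel)"

text \<open>Along every vertical period segment to the right of the disks, \<open>\<partial>\<^sub>y(u - H)\<close> integrates
  to \<open>k\<^sub>u - k\<^sub>H\<close>; Cauchy-Schwarz on a rectangle of width \<open>N\<close> gives the bound.\<close>

lemma strip_energy_ge:
  fixes u H :: "real \<times> real \<Rightarrow> real"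
  assumes "\<epsilon> > 0" and "\<delta> > 0"
    and diff_u: "\<And>p. p \<in> exterior \<epsilon> \<delta> \<Longrightarrow> u differentiable (at p)"
    and cont_u: "continuous_on (exterior \<epsilon> \<delta>) (py u)"
    and diff_H: "\<And>p. H differentiable (at p)"
    and cont_H: "continuous_on UNIV (py H)"
    and shift_u: "\<And>p. p \<in> exterior \<epsilon> \<delta> \<Longrightarrow> u (p + (0, 2 + \<delta>)) - u p = k\<^sub>u"
    and shift_H: "\<And>p. H (p + (0, 2 + \<delta>)) - H p = k\<^sub>H"
    and "N \<ge> 0"
  shows "ennreal (N * (k\<^sub>u - k\<^sub>H)\<^sup>2 / (2 + \<delta>)) \<le> strip_energy \<epsilon> \<delta> u H"
proof -
  define a b where "a = - 1 - \<delta> / 2" and "b = 1 + \<delta> / 2"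
  define x0 where "x0 = 2 + \<epsilon>"
  define f where "f p = py u p - py H p" for p
  let ?R = "cbox (x0, a) (x0 + N, b)"
  have right: "p \<in> exterior \<epsilon> \<delta>" if "x0 \<le> fst p" for p
    using right_half_plane_mem_exterior[OF assms(1)] that unfolding x0_def by blast
  have slice: "((\<lambda>t. f (x, t)) has_integral k\<^sub>u - k\<^sub>H) {a..b}" if "x0 \<le> x" for x
  proof -
    have "((\<lambda>t. f (x, t)) has_integral (u (x, b) - u (x, a)) - (H (x, b) - H (x, a))) {a..b}"
      unfolding f_def using assms(2) that right diff_u diff_H
      by (intro has_integral_diff has_integral_py) (auto simp: a_def b_def)
    moreover have "(x, a) + (0, 2 + \<delta>) = (x, b)"
      by (simp add: a_def b_def)
    ultimately show ?thesis
      using shift_u[of "(x, a)"] shift_H[of "(x, a)"] right[of "(x, a)"] that by simp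
  qed
  have cont_f: "continuous_on ?R f"
    unfolding f_def using right
    by (intro continuous_on_diff continuous_on_subset[OF cont_u] continuous_on_subset[OF cont_H])
       (auto simp: cbox_Pair_iff)
  have "N * (k\<^sub>u - k\<^sub>H)\<^sup>2 / (2 + \<delta>) \<le> integral ?R (\<lambda>p. (f p)\<^sup>2)"
    using rectangle_integral_square_ge[OF cont_f, of "k\<^sub>u - k\<^sub>H"] slice assms(2,9)
    by (simp add: a_def b_def)
  then have "ennreal (N * (k\<^sub>u - k\<^sub>H)\<^sup>2 / (2 + \<delta>)) \<le> ennreal (integral ?R (\<lambda>p. (f p)\<^sup>2))"
    by (rule ennreal_leI)
  also have "\<dots> \<le> strip_energy \<epsilon> \<delta> u H"
    unfolding strip_energy_def
  proof (intro integral_cbox_le_nn_integral continuous_intros cont_f conjI)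
    fix p assume "p \<in> box (x0, a) (x0 + N, b)"
    then have p: "x0 < fst p" "a < snd p" "snd p < b"
      by (auto simp: box_Pair_eq)
    then have "p \<in> exterior \<epsilon> \<delta>"
      using right by simp
    then have "1 < dist (cL \<epsilon> \<delta> 0) p" "1 < dist (cR \<epsilon> \<delta> 0) p"
      unfolding exterior_def centres_def by auto
    then have "p \<notin> closure (ball (cL \<epsilon> \<delta> 0) 1 \<union> ball (cR \<epsilon> \<delta> 0) 1)"
      by (simp add: closure_Un)
    moreover have "p \<in> strip \<delta>"
      using p by (cases p) (auto simp: strip_def a_def b_def)
    ultimately show "(f p)\<^sup>2 \<le> indicator (strip \<delta> - closure (ball (cL \<epsilon> \<delta> 0) 1 \<union> ball (cR \<epsilon> \<delta> 0) 1)) p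
        * ((px u p - px H p)\<^sup>2 + (py u p - py H p)\<^sup>2)"
      by (simp add: f_def)
  qed simp
  finally show ?thesis .
qed

lemma shift_increment_eq_of_finite_energy:
  fixes u H :: "real \<times> real \<Rightarrow> real"
  assumes "\<epsilon> > 0" and "\<delta> > 0"
    and "\<And>p. p \<in> exterior \<epsilon> \<delta> \<Longrightarrow> u differentiable (at p)"
    and "continuous_on (exterior \<epsilon> \<delta>) (py u)"
    and "\<And>p. H differentiable (at p)"
    and "continuous_on UNIV (py H)"
    and "\<And>p. p \<in> exterior \<epsilon> \<delta> \<Longrightarrow> u (p + (0, 2 + \<delta>)) - u p = k\<^sub>u"
    and "\<And>p. H (p + (0, 2 + \<delta>)) - H p = k\<^sub>H"
    and "strip_energy \<epsilon> \<delta> u H < \<infinity>"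
  shows "k\<^sub>u = k\<^sub>H"
proof (rule ccontr)
  assume "k\<^sub>u \<noteq> k\<^sub>H"
  then have pos: "(k\<^sub>u - k\<^sub>H)\<^sup>2 > 0"
    by simp
  obtain r where "0 \<le> r" and r: "strip_energy \<epsilon> \<delta> u H = ennreal r"
    using assms(9) by (cases rule: ennreal_cases) auto
  define N where "N = (r + 1) * (2 + \<delta>) / (k\<^sub>u - k\<^sub>H)\<^sup>2"
  have "N \<ge> 0"
    using pos assms(2) \<open>0 \<le> r\<close> unfolding N_def by simp
  from strip_energy_ge[OF assms(1-8) this] have "r + 1 \<le> r"
    using pos assms(2) \<open>0 \<le> r\<close> unfolding N_def r by (simp add: ennreal_le_iff)
  then show False
    by simp
qed

lemma shift_increment_on_sphere:
  fixes u :: "real \<times> real \<Rightarrow> real"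
  assumes "\<epsilon> > 0" and "\<delta> > 0"
    and cont: "continuous_on (- disks \<epsilon> \<delta>) u"
    and shift: "\<And>p. p \<in> exterior \<epsilon> \<delta> \<Longrightarrow> u (p + (0, 2 + \<delta>)) - u p = k"
    and "c \<in> centres \<epsilon> \<delta>" and "p \<in> sphere c 1"
  shows "u (p + (0, 2 + \<delta>)) = u p + k"
proof -
  have "exterior \<epsilon> \<delta> \<subseteq> - disks \<epsilon> \<delta>"
    unfolding exterior_eq_compl_closure_disks[OF assms(2)] using closure_subset by blast
  moreover have "closed (- disks \<epsilon> \<delta>)"
    unfolding disks_eq_Union_balls by (intro closed_Compl open_UN) auto
  ultimately have closure_sub: "closure (exterior \<epsilon> \<delta>) \<subseteq> - disks \<epsilon> \<delta>"
    by (rule closure_minimal)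
  have "continuous_on (- disks \<epsilon> \<delta>) (\<lambda>q. u (q + (0, 2 + \<delta>)))"
    using add_period_mem_disks_iff
    by (intro continuous_on_compose2[OF cont]) (auto intro!: continuous_intros)
  then have "continuous_on (closure (exterior \<epsilon> \<delta>)) (\<lambda>q. u (q + (0, 2 + \<delta>)) - u q)"
    by (intro continuous_on_subset[OF _ closure_sub] continuous_on_diff cont)
  moreover have "p \<in> closure (exterior \<epsilon> \<delta>)"
    using sphere_subset_closure_exterior[OF assms(1,2,5)] assms(6) by blast
  ultimately have "u (p + (0, 2 + \<delta>)) - u p = k"
    using continuous_constant_on_closure[where f = "\<lambda>q. u (q + (0, 2 + \<delta>)) - u q"] shift
    by blast
  then show ?thesis
    by simp
qed

lemma values_on_translated_spheres:
  fixes u :: "'a::real_normed_vector \<Rightarrow> real" and c :: "int \<Rightarrow> 'a"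
  assumes translate: "\<And>n. c (n + 1) = c n + e"
    and shift: "\<And>n p. p \<in> sphere (c n) r \<Longrightarrow> u (p + e) = u p + k"
    and base: "\<forall>p\<in>sphere (c 0) r. u p = a"
  shows "\<forall>p\<in>sphere (c n) r. u p = a + of_int n * k"
proof (induction n rule: int_induct[where k = 0])
  case base
  then show ?case
    using assms(3) by simp
next
  case (step1 n)
  show ?case
  proof
    fix p assume "p \<in> sphere (c (n + 1)) r"
    then have "p - e \<in> sphere (c n) r"
      unfolding translate by (metis dist_add_cancel2 diff_add_cancel mem_sphere)
    then have "u (p - e) = a + of_int n * k" and "u p = u (p - e) + k"
      using step1(2) shift[of "p - e" n] by auto
    then show "u p = a + of_int (n + 1) * k"
      by (simp add: algebra_simps)
  qed
next
  case (step2 n)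
  show ?case
  proof
    fix p assume "p \<in> sphere (c (n - 1)) r"
    then have "p + e \<in> sphere (c n) r"
      using translate[of "n - 1"] by simp
    then have "u (p + e) = a + of_int n * k" and "u (p + e) = u p + k"
      using step2(2) shift[of p "n - 1"] \<open>p \<in> sphere (c (n - 1)) r\<close> by auto
    then show "u p = a + of_int (n - 1) * k"
      by (simp add: algebra_simps)
  qed
qed

lemma add_period_eq: "p + (0, 2 + \<delta>) = (fst p, snd p + 2 + \<delta>)"
  for p :: "real \<times> real"
  by (cases p) (simp add: add.assoc)

lemma harmonic_on_continuous_on_py:
  assumes "harmonic_on S u"
  shows "continuous_on S (py u)"
  using assms unfolding harmonic_on_def
  by (intro continuous_at_imp_continuous_on ballI differentiable_imp_continuous_within) auto

lemma solution_shift_on_sphere: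
  fixes u H :: "real \<times> real \<Rightarrow> real"
  assumes "\<epsilon> > 0" and "\<delta> > 0"
    and H: "harmonic_on UNIV H"
    and periodic_H: "\<forall>x y. px H (x, y) = px H (x, y + 2 + \<delta>) \<and> py H (x, y) = py H (x, y + 2 + \<delta>)"
    and u: "solution_for \<epsilon> \<delta> H u"
    and "c \<in> centres \<epsilon> \<delta>" and "p \<in> sphere c 1"
  shows "u (p + (0, 2 + \<delta>)) = u p + (H (0, 1 + \<delta> / 2) - H (0, - 1 - \<delta> / 2))"
proof -
  note ext = exterior_eq_compl_closure_disks[OF assms(2)]
  have harm_u: "harmonic_on (exterior \<epsilon> \<delta>) u"
    and cont_u: "continuous_on (- disks \<epsilon> \<delta>) u"
    and energy: "strip_energy \<epsilon> \<delta> u H < \<infinity>"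
    and periodic: "\<forall>x y. (x, y) \<notin> closure (disks \<epsilon> \<delta>) \<longrightarrow>
           px u (x, y) = px u (x, y + 2 + \<delta>) \<and> py u (x, y) = py u (x, y + 2 + \<delta>)"
    using u unfolding solution_for_def strip_energy_def ext by blast+
  have periodic_u: "px u (q + (0, 2 + \<delta>)) = px u q \<and> py u (q + (0, 2 + \<delta>)) = py u q"
    if "q \<in> exterior \<epsilon> \<delta>" for q
    using periodic[rule_format, of "fst q" "snd q"] that unfolding ext add_period_eq by simp
  have diff_u: "\<And>p. p \<in> exterior \<epsilon> \<delta> \<Longrightarrow> u differentiable (at p)"
    and diff_H: "\<And>p. H differentiable (at p)"
    using harm_u H unfolding harmonic_on_def by auto
  have periodic_H_shift: "px H (q + (0, 2 + \<delta>)) = px H q \<and> py H (q + (0, 2 + \<delta>)) = py H q" for q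
    using periodic_H unfolding add_period_eq by simp
  have "(0::real, - 1 - \<delta> / 2) + (0, 2 + \<delta>) = (0, 1 + \<delta> / 2)"
    by simp
  then have "H (q + (0, 2 + \<delta>)) - H q = H (0, 1 + \<delta> / 2) - H (0, - 1 - \<delta> / 2)" for q
    using shift_increment_eq[OF diff_H periodic_H_shift, of q "(0, - 1 - \<delta> / 2)"] by simp
  moreover have shift_u: "u (q + (0, 2 + \<delta>)) - u q = u (0, 2 + \<delta>) - u 0"
    if "q \<in> exterior \<epsilon> \<delta>" for q
    using exterior_shift_increment_eq[OF assms(1,2) diff_u periodic_u that] by blast
  ultimately have "u (0, 2 + \<delta>) - u 0 = H (0, 1 + \<delta> / 2) - H (0, - 1 - \<delta> / 2)"
    using shift_increment_eq_of_finite_energy[OF assms(1,2) diff_u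
        harmonic_on_continuous_on_py[OF harm_u] diff_H harmonic_on_continuous_on_py[OF H] _ _ energy]
    by blast
  with shift_u show ?thesis
    using shift_increment_on_sphere[OF assms(1,2) cont_u _ assms(6,7)] by auto
qed

theorem proposition2p1:
  fixes \<epsilon> \<delta> :: real and H u :: "real \<times> real \<Rightarrow> real"
  assumes "\<epsilon> > 0" and "\<delta> > 0"
    and "harmonic_on UNIV H"
    and "\<forall>x y. px H (x, y) = px H (x, y + 2 + \<delta>) \<and> py H (x, y) = py H (x, y + 2 + \<delta>)"
    and "solution_for \<epsilon> \<delta> H u"
  shows "\<exists>aL aR :: int \<Rightarrow> real.
           (\<forall>n. \<forall>p\<in>sphere (cL \<epsilon> \<delta> n) 1. u p = aL n)
         \<and> (\<forall>n. \<forall>p\<in>sphere (cR \<epsilon> \<delta> n) 1. u p = aR n)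
         \<and> (\<forall>n. aR (n + 1) - aR n = H (0, 1 + \<delta>/2) - H (0, -1 - \<delta>/2)
               \<and> aL (n + 1) - aL n = H (0, 1 + \<delta>/2) - H (0, -1 - \<delta>/2))"
proof -
  define k where "k = H (0, 1 + \<delta>/2) - H (0, -1 - \<delta>/2)"
  obtain a b where a: "\<forall>p\<in>sphere (cL \<epsilon> \<delta> 0) 1. u p = a"
    and b: "\<forall>p\<in>sphere (cR \<epsilon> \<delta> 0) 1. u p = b"
    using assms(5) unfolding solution_for_def by blast
  have shift: "u (p + (0, 2 + \<delta>)) = u p + k" if "c \<in> centres \<epsilon> \<delta>" "p \<in> sphere c 1" for c p
    using solution_shift_on_sphere[OF assms that] unfolding k_def by simp
  have "\<forall>p\<in>sphere (cL \<epsilon> \<delta> n) 1. u p = a + of_int n * k" for n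
  proof (rule values_on_translated_spheres[where c = "cL \<epsilon> \<delta>"])
    show "cL \<epsilon> \<delta> (m + 1) = cL \<epsilon> \<delta> m + (0, 2 + \<delta>)" for m
      by (simp add: cL_add_period)
    show "u (p + (0, 2 + \<delta>)) = u p + k" if "p \<in> sphere (cL \<epsilon> \<delta> m) 1" for m p
      using shift[of "cL \<epsilon> \<delta> m" p] that by (simp add: centres_def)
  qed (rule a)
  moreover have "\<forall>p\<in>sphere (cR \<epsilon> \<delta> n) 1. u p = b + of_int n * k" for n
  proof (rule values_on_translated_spheres[where c = "cR \<epsilon> \<delta>"])
    show "cR \<epsilon> \<delta> (m + 1) = cR \<epsilon> \<delta> m + (0, 2 + \<delta>)" for m
      by (simp add: cR_add_period)
    show "u (p + (0, 2 + \<delta>)) = u p + k" if "p \<in> sphere (cR \<epsilon> \<delta> m) 1" for m p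
      using shift[of "cR \<epsilon> \<delta> m" p] that by (simp add: centres_def)
  qed (rule b)
  ultimately show ?thesis
    by (intro exI[of _ "\<lambda>n. a + of_int n * k"] exI[of _ "\<lambda>n. b + of_int n * k"])
       (auto simp: algebra_simps k_def)
qed

end
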